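(* Let $n\ge3$, let $H$ be a non-trivial finitely generated abelian group, let $G$ be a group with a surjective homomorphism $\sigma\colon G\to S_n$, and let $W=H\wr_\sigma G=H^n\rtimes_\sigma G$. Assume that every abelian normal subgroup of $W$ is contained in $H^n$. If $G$ has the $R_\infty$-property, then $W$ has the $R_\infty$-property.
   Context: $H\wr_\sigma G=H^n\rtimes_\sigma G$ is the semidirect product in which $G$ acts on $H^n$ by permuting coordinates through $\sigma$: $g\cdot(h_1,\dots,h_n)=(h_{\sigma(g)(1)},\dots,h_{\sigma(g)(n)})$ (with the composition convention in $S_n$ making this a left action); $H^n$ is identified with $\{(\mathbf h,1)\}$. For an automorphism $\varphi$ of a group $X$, elements $x,y\in X$ are $\varphi$-twisted conjugate if $x=zy\varphi(z)^{-1}$ for some $z\in X$; the number of equivalence classes is the Reidemeister number $R(\varphi)\in\mathbb N\cup\{\infty\}$. $X$ has the $R_\infty$-property if $R(\varphi)=\infty$ for every $\varphi\in\mathrm{Aut}(X)$. *)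

theory Defs
  imports "HOL-Algebra.Algebra"
begin

text \<open>The paper's action (g.h)_i = h_{sigma(g)(i)} uses the opposite composition convention in S_n;
  translated to the usual convention it reads (g.h)_i = h_{(sigma g)^{-1}(i)}.\<close>

definition perm_act :: "('g \<Rightarrow> nat \<Rightarrow> nat) \<Rightarrow> nat \<Rightarrow> 'g \<Rightarrow> (nat \<Rightarrow> 'h) \<Rightarrow> (nat \<Rightarrow> 'h)"
  where "perm_act \<sigma> n g a = (\<lambda>i\<in>{1..n}. a (inv_into UNIV (\<sigma> g) i))"

definition wreath ::
  "('h, 'm) monoid_scheme \<Rightarrow> ('g, 'k) monoid_scheme \<Rightarrow> nat \<Rightarrow> ('g \<Rightarrow> nat \<Rightarrow> nat)
    \<Rightarrow> ((nat \<Rightarrow> 'h) \<times> 'g) monoid"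
  where "wreath H G n \<sigma> =
    \<lparr> carrier = (\<Pi>\<^sub>E i\<in>{1..n}. carrier H) \<times> carrier G,
      monoid.mult = (\<lambda>(a, g) (b, k).
                ((\<lambda>i\<in>{1..n}. a i \<otimes>\<^bsub>H\<^esub> perm_act \<sigma> n g b i), g \<otimes>\<^bsub>G\<^esub> k)),
      one = ((\<lambda>i\<in>{1..n}. \<one>\<^bsub>H\<^esub>), \<one>\<^bsub>G\<^esub>) \<rparr>"

definition wreath_base ::
  "('h, 'm) monoid_scheme \<Rightarrow> ('g, 'k) monoid_scheme \<Rightarrow> nat \<Rightarrow> ((nat \<Rightarrow> 'h) \<times> 'g) set"
  where "wreath_base H G n = (\<Pi>\<^sub>E i\<in>{1..n}. carrier H) \<times> {\<one>\<^bsub>G\<^esub>}"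

definition twisted_conj :: "('a, 'b) monoid_scheme \<Rightarrow> ('a \<Rightarrow> 'a) \<Rightarrow> ('a \<times> 'a) set"
  where "twisted_conj K \<phi> = {(x, y). x \<in> carrier K \<and> y \<in> carrier K \<and>
           (\<exists>z\<in>carrier K. x = monoid.mult K (monoid.mult K z y) (m_inv K (\<phi> z)))}"

definition reidemeister_infinite :: "('a, 'b) monoid_scheme \<Rightarrow> ('a \<Rightarrow> 'a) \<Rightarrow> bool"
  where "reidemeister_infinite K \<phi> = infinite (carrier K // twisted_conj K \<phi>)"

definition R_infty :: "('a, 'b) monoid_scheme \<Rightarrow> bool"
  where "R_infty K = (\<forall>\<phi>\<in>iso K K. reidemeister_infinite K \<phi>)"

definition fin_gen_group :: "('a, 'b) monoid_scheme \<Rightarrow> bool"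
  where "fin_gen_group K = (\<exists>S. finite S \<and> S \<subseteq> carrier K \<and> generate K S = carrier K)"

end

theory Submission
  imports Defs
begin

text \<open>The base group H^n is the kernel of the projection W \<rightarrow> G and is an abelian normal
  subgroup of W; by hypothesis it contains every abelian normal subgroup. Automorphisms map
  abelian normal subgroups to abelian normal subgroups, so H^n is characteristic. Hence an
  automorphism \<phi> of W induces an automorphism \<psi> of W/H^n \<cong> G, and the projection maps the
  \<phi>-twisted conjugacy classes onto the \<psi>-twisted ones, so R(\<phi>) \<ge> R(\<psi>) = \<infinity>.\<close>

lemma twisted_conj_class_image:
  assumes K: "group K" and G: "group G"
    and f: "f \<in> hom K G" and f_onto: "f ` carrier K = carrier G"
    and \<phi>: "\<phi> \<in> hom K K"
    and f\<phi>: "\<And>x. x \<in> carrier K \<Longrightarrow> f (\<phi> x) = \<psi> (f x)"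
    and y: "y \<in> carrier K"
  shows "f ` (twisted_conj K \<phi> `` {y}) = twisted_conj G \<psi> `` {f y}"
proof
  interpret K: group K by (rule K)
  interpret G: group G by (rule G)
  interpret f: group_hom K G f using K G f by (simp add: group_hom_def group_hom_axioms_def)
  have \<phi>_closed: "z \<in> carrier K \<Longrightarrow> \<phi> z \<in> carrier K" for z using \<phi> by (simp add: hom_in_carrier)
  show "f ` (twisted_conj K \<phi> `` {y}) \<subseteq> twisted_conj G \<psi> `` {f y}"
  proof clarify
    fix x assume "(y, x) \<in> twisted_conj K \<phi>"
    then obtain z where x: "x \<in> carrier K" and z: "z \<in> carrier K"
      and yzx: "y = z \<otimes>\<^bsub>K\<^esub> x \<otimes>\<^bsub>K\<^esub> inv\<^bsub>K\<^esub> \<phi> z"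
      by (auto simp: twisted_conj_def)
    have "f y = f z \<otimes>\<^bsub>G\<^esub> f x \<otimes>\<^bsub>G\<^esub> inv\<^bsub>G\<^esub> \<psi> (f z)"
      using x z \<phi>_closed[OF z] by (simp add: yzx f\<phi>[symmetric])
    then show "(f y, f x) \<in> twisted_conj G \<psi>"
      unfolding twisted_conj_def mem_Collect_eq case_prod_conv
      using x y z by (intro conjI bexI[of _ "f z"] f.hom_closed)
  qed
  show "twisted_conj G \<psi> `` {f y} \<subseteq> f ` (twisted_conj K \<phi> `` {y})"
  proof clarify
    fix g assume "(f y, g) \<in> twisted_conj G \<psi>"
    then obtain k where g: "g \<in> carrier G" and k: "k \<in> carrier G"
      and fy: "f y = k \<otimes>\<^bsub>G\<^esub> g \<otimes>\<^bsub>G\<^esub> inv\<^bsub>G\<^esub> \<psi> k"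
      by (auto simp: twisted_conj_def)
    obtain z where z: "z \<in> carrier K" and fz: "f z = k" using k f_onto by (metis imageE)
    define x where "x = inv\<^bsub>K\<^esub> z \<otimes>\<^bsub>K\<^esub> y \<otimes>\<^bsub>K\<^esub> \<phi> z"
    have x: "x \<in> carrier K" using y z \<phi>_closed[OF z] by (simp add: x_def)
    have "x = inv\<^bsub>K\<^esub> z \<otimes>\<^bsub>K\<^esub> (y \<otimes>\<^bsub>K\<^esub> \<phi> z)"
      using y z \<phi>_closed[OF z] by (simp add: x_def K.m_assoc)
    then have "z \<otimes>\<^bsub>K\<^esub> x = y \<otimes>\<^bsub>K\<^esub> \<phi> z"
      using x y z \<phi>_closed[OF z] by (simp add: K.inv_solve_left)
    then have "y = z \<otimes>\<^bsub>K\<^esub> x \<otimes>\<^bsub>K\<^esub> inv\<^bsub>K\<^esub> \<phi> z"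
      using x y z \<phi>_closed[OF z] by (simp add: K.inv_solve_right)
    then have "(y, x) \<in> twisted_conj K \<phi>" using x y z by (auto simp: twisted_conj_def)
    moreover have "f x = g"
    proof -
      have \<psi>k: "\<psi> k \<in> carrier G" using f\<phi>[OF z] f.hom_closed[OF \<phi>_closed[OF z]] by (simp add: fz)
      have "k \<otimes>\<^bsub>G\<^esub> g = f y \<otimes>\<^bsub>G\<^esub> \<psi> k"
        using fy g k \<psi>k by (simp add: G.m_assoc)
      moreover have "f x = inv\<^bsub>G\<^esub> k \<otimes>\<^bsub>G\<^esub> (f y \<otimes>\<^bsub>G\<^esub> \<psi> k)"
        using y z k \<psi>k \<phi>_closed[OF z] by (simp add: x_def fz f\<phi>[OF z] G.m_assoc)
      ultimately have "f x = inv\<^bsub>G\<^esub> k \<otimes>\<^bsub>G\<^esub> (k \<otimes>\<^bsub>G\<^esub> g)" by simp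
      then show ?thesis using g k by (simp add: G.m_assoc[symmetric])
    qed
    ultimately show "g \<in> f ` (twisted_conj K \<phi> `` {y})" by blast
  qed
qed

lemma reidemeister_infinite_if_surj_hom:
  assumes K: "group K" and G: "group G"
    and f: "f \<in> hom K G" and f_onto: "f ` carrier K = carrier G"
    and \<phi>: "\<phi> \<in> hom K K"
    and f\<phi>: "\<And>x. x \<in> carrier K \<Longrightarrow> f (\<phi> x) = \<psi> (f x)"
    and R: "reidemeister_infinite G \<psi>"
  shows "reidemeister_infinite K \<phi>"
proof -
  have "carrier G // twisted_conj G \<psi> = (\<Union>y\<in>carrier K. {twisted_conj G \<psi> `` {f y}})"
    unfolding quotient_def f_onto[symmetric] by (simp add: image_image)
  also have "\<dots> = (\<Union>y\<in>carrier K. {f ` (twisted_conj K \<phi> `` {y})})"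
    using twisted_conj_class_image[OF K G f f_onto \<phi> f\<phi>] by simp
  also have "\<dots> = (\<lambda>C. f ` C) ` (carrier K // twisted_conj K \<phi>)"
    by (auto simp: quotient_def)
  finally show ?thesis
    using R by (auto simp: reidemeister_infinite_def)
qed

lemma iso_if_intertwined_by_surj_hom:
  assumes K: "group K" and G: "group G"
    and f: "f \<in> hom K G" and f_onto: "f ` carrier K = carrier G"
    and \<phi>: "\<phi> \<in> iso K K" and ker: "\<phi> ` kernel K G f = kernel K G f"
    and f\<phi>: "\<And>x. x \<in> carrier K \<Longrightarrow> f (\<phi> x) = \<psi> (f x)"
  shows "\<psi> \<in> iso G G"
proof -
  interpret f: group_hom K G f using K G f by (simp add: group_hom_def group_hom_axioms_def)
  interpret \<phi>: group_hom K K \<phi> using K \<phi> by (simp add: group_hom_def group_hom_axioms_def iso_def)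
  have \<psi>_closed: "\<psi> g \<in> carrier G" if "g \<in> carrier G" for g
  proof -
    from that obtain x where "x \<in> carrier K" "g = f x" by (metis f_onto imageE)
    then show ?thesis by (simp add: f\<phi>[symmetric])
  qed
  have \<psi>_hom: "\<psi> \<in> hom G G"
  proof (rule homI)
    fix g h assume "g \<in> carrier G" "h \<in> carrier G"
    then obtain x y where x: "x \<in> carrier K" "g = f x" and y: "y \<in> carrier K" "h = f y"
      using f_onto by (metis imageE)
    have "\<psi> (g \<otimes>\<^bsub>G\<^esub> h) = \<psi> (f (x \<otimes>\<^bsub>K\<^esub> y))" using x y by simp
    also have "\<dots> = f (\<phi> (x \<otimes>\<^bsub>K\<^esub> y))" using x y by (intro f\<phi>[symmetric]) simp
    also have "\<dots> = \<psi> g \<otimes>\<^bsub>G\<^esub> \<psi> h" using x y by (simp add: f\<phi>)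
    finally show "\<psi> (g \<otimes>\<^bsub>G\<^esub> h) = \<psi> g \<otimes>\<^bsub>G\<^esub> \<psi> h" .
  qed (rule \<psi>_closed)
  moreover have "inj_on \<psi> (carrier G)"
    unfolding inj_on_one_iff'[OF \<psi>_hom G G]
  proof (intro allI impI)
    fix g assume g: "g \<in> carrier G" "\<psi> g = \<one>\<^bsub>G\<^esub>"
    obtain x where x: "x \<in> carrier K" "g = f x" using g(1) f_onto by (metis imageE)
    then have "\<phi> x \<in> kernel K G f" using g(2) by (simp add: kernel_def f\<phi>)
    then obtain x' where x': "x' \<in> kernel K G f" "\<phi> x = \<phi> x'" using ker by (metis imageE)
    then have "x = x'" using x(1) \<phi> by (auto simp: kernel_def iso_def bij_betw_def dest: inj_onD)
    then show "g = \<one>\<^bsub>G\<^esub>" using x x' by (simp add: kernel_def)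
  qed
  moreover have "carrier G \<subseteq> \<psi> ` carrier G"
  proof
    fix g assume "g \<in> carrier G"
    then obtain x where x: "x \<in> carrier K" "g = f (\<phi> x)"
      using f_onto \<phi> by (metis imageE iso_iff)
    then show "g \<in> \<psi> ` carrier G" by (simp add: f\<phi>)
  qed
  ultimately show ?thesis using \<psi>_closed by (auto simp: iso_iff)
qed

lemma induced_iso_if_kernel_invariant:
  assumes K: "group K" and G: "group G"
    and f: "f \<in> hom K G" and f_onto: "f ` carrier K = carrier G"
    and \<phi>: "\<phi> \<in> iso K K" and ker: "\<phi> ` kernel K G f = kernel K G f"
  obtains \<psi> where "\<psi> \<in> iso G G" and "\<And>x. x \<in> carrier K \<Longrightarrow> f (\<phi> x) = \<psi> (f x)"
proof -
  interpret G: group G by (rule G)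
  interpret f: group_hom K G f using K G f by (simp add: group_hom_def group_hom_axioms_def)
  interpret \<phi>: group_hom K K \<phi> using K \<phi> by (simp add: group_hom_def group_hom_axioms_def iso_def)
  have f_eq_iff: "f x = f y \<longleftrightarrow> inv\<^bsub>K\<^esub> x \<otimes>\<^bsub>K\<^esub> y \<in> kernel K G f"
    if "x \<in> carrier K" "y \<in> carrier K" for x y
    using that by (auto simp: kernel_def G.inv_solve_left')
  \<comment> \<open>Any preimage will do: two preimages differ by a kernel element, and \<phi> preserves the kernel.\<close>
  define \<psi> where "\<psi> g = f (\<phi> (inv_into (carrier K) f g))" for g
  have f\<phi>: "f (\<phi> x) = \<psi> (f x)" if x: "x \<in> carrier K" for x
  proof -
    define x' where "x' = inv_into (carrier K) f (f x)"
    have x': "x' \<in> carrier K" "f x' = f x"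
      using x by (auto simp: x'_def inv_into_into f_inv_into_f)
    then have "inv\<^bsub>K\<^esub> x' \<otimes>\<^bsub>K\<^esub> x \<in> kernel K G f" using x f_eq_iff by blast
    then have "\<phi> (inv\<^bsub>K\<^esub> x' \<otimes>\<^bsub>K\<^esub> x) \<in> kernel K G f" using ker by blast
    then have "f (\<phi> x') = f (\<phi> x)" using x x' f_eq_iff by simp
    then show ?thesis by (simp add: \<psi>_def x'_def)
  qed
  then show ?thesis
    using that iso_if_intertwined_by_surj_hom[OF K G f f_onto \<phi> ker] by blast
qed

lemma R_infty_if_characteristic_kernel:
  assumes K: "group K" and G: "group G"
    and f: "f \<in> hom K G" and f_onto: "f ` carrier K = carrier G"
    and char: "\<And>\<phi>. \<phi> \<in> iso K K \<Longrightarrow> \<phi> ` kernel K G f \<subseteq> kernel K G f"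
    and R: "R_infty G"
  shows "R_infty K"
  unfolding R_infty_def
proof
  fix \<phi> assume \<phi>: "\<phi> \<in> iso K K"
  have "kernel K G f \<subseteq> \<phi> ` kernel K G f"
  proof
    fix x assume x: "x \<in> kernel K G f"
    have \<phi>': "inv_into (carrier K) \<phi> \<in> iso K K" using \<phi> by (rule group.iso_set_sym[OF K])
    have "x = \<phi> (inv_into (carrier K) \<phi> x)"
      using x \<phi> by (simp add: kernel_def iso_def bij_betw_def f_inv_into_f)
    moreover have "inv_into (carrier K) \<phi> x \<in> kernel K G f" using char[OF \<phi>'] x by blast
    ultimately show "x \<in> \<phi> ` kernel K G f" by (rule image_eqI)
  qed
  with char[OF \<phi>] have "\<phi> ` kernel K G f = kernel K G f" by (rule subset_antisym)
  then obtain \<psi> where \<psi>: "\<psi> \<in> iso G G" and f\<phi>: "\<And>x. x \<in> carrier K \<Longrightarrow> f (\<phi> x) = \<psi> (f x)"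
    using induced_iso_if_kernel_invariant[OF K G f f_onto \<phi>] by blast
  have "\<phi> \<in> hom K K" using \<phi> by (simp add: iso_def)
  moreover have "reidemeister_infinite G \<psi>" using R \<psi> by (simp add: R_infty_def)
  ultimately show "reidemeister_infinite K \<phi>"
    using reidemeister_infinite_if_surj_hom[OF K G f f_onto] f\<phi> by blast
qed

lemma hom_image_commuting:
  assumes f: "f \<in> hom K L" and N: "N \<subseteq> carrier K"
    and comm: "\<forall>x\<in>N. \<forall>y\<in>N. x \<otimes>\<^bsub>K\<^esub> y = y \<otimes>\<^bsub>K\<^esub> x"
  shows "\<forall>x\<in>f ` N. \<forall>y\<in>f ` N. x \<otimes>\<^bsub>L\<^esub> y = y \<otimes>\<^bsub>L\<^esub> x"
  using f N comm by (auto simp: hom_def subset_iff) metis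

lemma iso_image_subset_if_largest_abelian_normal:
  assumes K: "group K" and N: "N \<lhd> K"
    and comm: "\<forall>x\<in>N. \<forall>y\<in>N. x \<otimes>\<^bsub>K\<^esub> y = y \<otimes>\<^bsub>K\<^esub> x"
    and largest: "\<forall>M. M \<lhd> K \<and> (\<forall>x\<in>M. \<forall>y\<in>M. x \<otimes>\<^bsub>K\<^esub> y = y \<otimes>\<^bsub>K\<^esub> x) \<longrightarrow> M \<subseteq> N"
    and \<phi>: "\<phi> \<in> iso K K"
  shows "\<phi> ` N \<subseteq> N"
proof -
  have "\<phi> ` N \<lhd> K" using iso_normal_subgroup[OF \<phi> K K N] .
  moreover have "\<forall>x\<in>\<phi> ` N. \<forall>y\<in>\<phi> ` N. x \<otimes>\<^bsub>K\<^esub> y = y \<otimes>\<^bsub>K\<^esub> x"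
  proof (rule hom_image_commuting[OF _ _ comm])
    show "\<phi> \<in> hom K K" using \<phi> by (simp add: iso_def)
    show "N \<subseteq> carrier K" using normal_imp_subgroup[OF N] by (rule subgroup.subset)
  qed
  ultimately show ?thesis using largest by simp
qed

lemma snd_hom_wreath: "snd \<in> hom (wreath H G n \<sigma>) G"
  by (auto simp: hom_def wreath_def)

locale perm_wreath = H: group H + G: group G
  for H :: "('h, 'm) monoid_scheme" and G :: "('g, 'k) monoid_scheme" +
  fixes n :: nat and \<sigma> :: "'g \<Rightarrow> nat \<Rightarrow> nat"
  assumes \<sigma>_hom: "\<sigma> \<in> hom G (sym_group n)"
begin

abbreviation W where "W \<equiv> wreath H G n \<sigma>"

abbreviation Hn where "Hn \<equiv> \<Pi>\<^sub>E i\<in>{1..n}. carrier H"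

lemma \<sigma>_permutes: "g \<in> carrier G \<Longrightarrow> \<sigma> g permutes {1..n}"
  using \<sigma>_hom by (auto simp: hom_def sym_group_carrier)

lemma \<sigma>_mult: "g \<in> carrier G \<Longrightarrow> k \<in> carrier G \<Longrightarrow> \<sigma> (g \<otimes>\<^bsub>G\<^esub> k) = \<sigma> g \<circ> \<sigma> k"
  using \<sigma>_hom by (simp add: hom_def sym_group_mult)

lemma \<sigma>_one: "\<sigma> \<one>\<^bsub>G\<^esub> = id"
  using group_hom.hom_one[of G "sym_group n" \<sigma>] \<sigma>_hom G.group_axioms sym_group_is_group
  by (simp add: group_hom_def group_hom_axioms_def sym_group_one)

lemma inv_\<sigma>_in: "g \<in> carrier G \<Longrightarrow> i \<in> {1..n} \<Longrightarrow> inv_into UNIV (\<sigma> g) i \<in> {1..n}"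
  using permutes_in_image[OF permutes_inv[OF \<sigma>_permutes]] by blast

lemma perm_act_closed:
  "g \<in> carrier G \<Longrightarrow> a \<in> Hn \<Longrightarrow> perm_act \<sigma> n g a \<in> Hn"
  unfolding perm_act_def restrict_PiE_iff by (blast intro: PiE_mem inv_\<sigma>_in)

lemma perm_act_mult:
  assumes "g \<in> carrier G" "k \<in> carrier G"
  shows "perm_act \<sigma> n (g \<otimes>\<^bsub>G\<^esub> k) a = perm_act \<sigma> n g (perm_act \<sigma> n k a)"
proof -
  have "inv_into UNIV (\<sigma> (g \<otimes>\<^bsub>G\<^esub> k)) = inv_into UNIV (\<sigma> k) \<circ> inv_into UNIV (\<sigma> g)"
    using assms by (simp add: \<sigma>_mult o_inv_distrib permutes_bij[OF \<sigma>_permutes])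
  then show ?thesis
    unfolding perm_act_def using assms inv_\<sigma>_in[OF assms(1)]
    by (intro restrict_ext) (simp del: atLeastAtMost_iff)
qed

lemma perm_act_one: "a \<in> Hn \<Longrightarrow> perm_act \<sigma> n \<one>\<^bsub>G\<^esub> a = a"
  by (auto simp: perm_act_def \<sigma>_one inv_id)

lemma perm_act_pointwise:
  assumes "g \<in> carrier G" "i \<in> {1..n}"
  shows "perm_act \<sigma> n g (\<lambda>j\<in>{1..n}. u j \<otimes>\<^bsub>H\<^esub> v j) i =
    perm_act \<sigma> n g u i \<otimes>\<^bsub>H\<^esub> perm_act \<sigma> n g v i"
  using assms inv_\<sigma>_in[OF assms] by (simp add: perm_act_def del: atLeastAtMost_iff)

lemma perm_act_in_carrier:
  "g \<in> carrier G \<Longrightarrow> a \<in> Hn \<Longrightarrow> i \<in> {1..n} \<Longrightarrow> perm_act \<sigma> n g a i \<in> carrier H"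
  using perm_act_closed by blast

lemma group_wreath: "group W"
proof (rule groupI)
  fix x y z
  assume "x \<in> carrier W" "y \<in> carrier W" "z \<in> carrier W"
  then obtain a g b k c l where xyz: "x = (a, g)" "y = (b, k)" "z = (c, l)"
    and abc: "a \<in> Hn" "b \<in> Hn" "c \<in> Hn"
    and gkl: "g \<in> carrier G" "k \<in> carrier G" "l \<in> carrier G"
    by (auto simp: wreath_def)
  \<comment> \<open>Deleting \<open>One_nat_def\<close> stops simp from rewriting \<open>{1..n}\<close> to \<open>{Suc 0..n}\<close>,
    which would prevent the \<open>perm_act\<close> lemmas from matching.\<close>
  show "x \<otimes>\<^bsub>W\<^esub> y \<otimes>\<^bsub>W\<^esub> z = x \<otimes>\<^bsub>W\<^esub> (y \<otimes>\<^bsub>W\<^esub> z)"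
    using abc gkl perm_act_in_carrier[OF gkl(1) abc(2)]
      perm_act_in_carrier[OF gkl(1) perm_act_closed[OF gkl(2) abc(3)]]
    by (auto simp: xyz wreath_def perm_act_mult perm_act_pointwise H.m_assoc G.m_assoc PiE_iff
        simp del: One_nat_def intro!: restrict_ext)
next
  fix x y
  assume "x \<in> carrier W" "y \<in> carrier W"
  then show "x \<otimes>\<^bsub>W\<^esub> y \<in> carrier W"
    using perm_act_in_carrier by (auto simp: wreath_def PiE_iff simp del: One_nat_def)
next
  show "\<one>\<^bsub>W\<^esub> \<in> carrier W" by (auto simp: wreath_def)
next
  fix x assume "x \<in> carrier W"
  then obtain a g where x: "x = (a, g)" "a \<in> Hn" "g \<in> carrier G"
    by (auto simp: wreath_def)
  then show "\<one>\<^bsub>W\<^esub> \<otimes>\<^bsub>W\<^esub> x = x"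
    by (auto simp: wreath_def perm_act_one PiE_iff extensional_def fun_eq_iff
        simp del: One_nat_def)
  let ?y = "(\<lambda>i\<in>{1..n}. inv\<^bsub>H\<^esub> perm_act \<sigma> n (inv\<^bsub>G\<^esub> g) a i, inv\<^bsub>G\<^esub> g)"
  have "?y \<in> carrier W" "?y \<otimes>\<^bsub>W\<^esub> x = \<one>\<^bsub>W\<^esub>"
    using x perm_act_in_carrier by (auto simp: wreath_def intro!: restrict_ext)
  then show "\<exists>y\<in>carrier W. y \<otimes>\<^bsub>W\<^esub> x = \<one>\<^bsub>W\<^esub>" by blast
qed

lemma snd_wreath_onto: "snd ` carrier W = carrier G"
proof
  show "snd ` carrier W \<subseteq> carrier G" by (auto simp: wreath_def)
  show "carrier G \<subseteq> snd ` carrier W"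
  proof
    fix g assume "g \<in> carrier G"
    then have "((\<lambda>i\<in>{1..n}. \<one>\<^bsub>H\<^esub>), g) \<in> carrier W"
      by (simp add: wreath_def)
    then show "g \<in> snd ` carrier W" by (rule rev_image_eqI) simp
  qed
qed

lemma kernel_snd_wreath: "kernel W G snd = wreath_base H G n"
  by (auto simp: kernel_def wreath_def wreath_base_def)

lemma normal_wreath_base: "wreath_base H G n \<lhd> W"
proof -
  interpret snd: group_hom W G snd
    by (simp add: group_hom_def group_hom_axioms_def group_wreath snd_hom_wreath G.is_group)
  show ?thesis using snd.normal_kernel by (simp add: kernel_snd_wreath)
qed

lemma wreath_base_commute:
  assumes "comm_group H"
  shows "\<forall>x\<in>wreath_base H G n. \<forall>y\<in>wreath_base H G n. x \<otimes>\<^bsub>W\<^esub> y = y \<otimes>\<^bsub>W\<^esub> x"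
proof -
  interpret H: comm_group H by (rule assms)
  show ?thesis
    by (auto simp: wreath_base_def wreath_def perm_act_one PiE_iff fun_eq_iff H.m_comm
        simp del: One_nat_def)
qed

end

theorem theorem3p13:
  fixes H :: "('h, 'm) monoid_scheme" and G :: "('g, 'k) monoid_scheme"
    and n :: nat and \<sigma> :: "'g \<Rightarrow> nat \<Rightarrow> nat"
  assumes "n \<ge> 3"
    and "comm_group H" and "fin_gen_group H" and "carrier H \<noteq> {\<one>\<^bsub>H\<^esub>}"
    and "group G"
    and "\<sigma> \<in> hom G (sym_group n)" and "\<sigma> ` carrier G = carrier (sym_group n)"
    and "\<forall>N. N \<lhd> wreath H G n \<sigma> \<and>
             (\<forall>x\<in>N. \<forall>y\<in>N. x \<otimes>\<^bsub>wreath H G n \<sigma>\<^esub> y = y \<otimes>\<^bsub>wreath H G n \<sigma>\<^esub> x)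
           \<longrightarrow> N \<subseteq> wreath_base H G n"
    and "R_infty G"
  shows "R_infty (wreath H G n \<sigma>)"
proof -
  interpret perm_wreath H G n \<sigma>
    using assms(2,5,6) by (simp add: perm_wreath_def perm_wreath_axioms_def comm_group.axioms(2))
  show ?thesis
  proof (rule R_infty_if_characteristic_kernel
      [OF group_wreath G.is_group snd_hom_wreath snd_wreath_onto _ assms(9)])
    show "\<phi> ` kernel (wreath H G n \<sigma>) G snd \<subseteq> kernel (wreath H G n \<sigma>) G snd"
      if "\<phi> \<in> iso (wreath H G n \<sigma>) (wreath H G n \<sigma>)" for \<phi>
      unfolding kernel_snd_wreath
      using group_wreath normal_wreath_base wreath_base_commute[OF assms(2)] assms(8) that
      by (rule iso_image_subset_if_largest_abelian_normal)
  qed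
qed

end
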